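(* Let $N=\{1,2,\dots,n\}$ be a set of players and let $v:2^N\to\mathbb{R}$ be a monotonic characteristic function with $v(\emptyset)=0$, the grand coalition having value $v(N)$. Let $x=(x_1,\dots,x_n)$ be a payoff vector, where the players are indexed so that $x_1\le x_2\le\dots\le x_n$, and let $(\phi_1,\dots,\phi_n)$ be the Shapley values of the players with the same indices; assume $\phi_n>0$. Then $x$ is both stable and proportional if and only if for every $i\in\{1,\dots,n\}$, $$x_i=\phi_i\,\frac{v(N)}{\phi_n}\qquad\text{and}\qquad \phi_i\,\frac{v(N)}{\phi_n}\;\ge\; v(\{1,2,\dots,i\}).$$
   Context: A characteristic function $v:2^N\to\mathbb{R}$ assigns a value $v(C)$ to each coalition $C\subseteq N$; it is monotonic if $C\subseteq C'$ implies $v(C)\le v(C')$. When the grand coalition $N$ forms, a payoff vector is a vector $x=(x_1,\dots,x_n)\in\mathbb{R}^n$ with $x_i\le v(N)$ for every player $i$ (each player individually receives at most $v(N)$; the sum of payoffs is not restricted). A payoff vector $x$ is stable if for every nonempty coalition $C\subseteq N$ there exists $k\in C$ with $x_k\ge v(C)$. The Shapley value of player $i$ is $$\phi_i=\sum_{S\subseteq N\setminus\{i\}}\frac{|S|!\,(n-|S|-1)!}{n!}\big(v(S\cup\{i\})-v(S)\big).$$ A payoff vector $x$ is proportional if there exists a constant $\alpha>0$ with $x_i=\alpha\phi_i$ for all $i$. *)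

theory Defs
  imports Complex_Main
begin

text \<open>Players are N = {1..n}; a characteristic function is v :: nat set \<Rightarrow> real
  (only its values on subsets of N matter). Payoff vectors are x :: nat \<Rightarrow> real
  (only the values at players in N matter).\<close>

definition monotonic_game :: "nat set \<Rightarrow> (nat set \<Rightarrow> real) \<Rightarrow> bool" where
  "monotonic_game N v \<longleftrightarrow> (\<forall>C C'. C \<subseteq> C' \<and> C' \<subseteq> N \<longrightarrow> v C \<le> v C')"

definition payoff_vector :: "nat set \<Rightarrow> (nat set \<Rightarrow> real) \<Rightarrow> (nat \<Rightarrow> real) \<Rightarrow> bool" where
  "payoff_vector N v x \<longleftrightarrow> (\<forall>i\<in>N. x i \<le> v N)"

definition stable :: "nat set \<Rightarrow> (nat set \<Rightarrow> real) \<Rightarrow> (nat \<Rightarrow> real) \<Rightarrow> bool" where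
  "stable N v x \<longleftrightarrow> (\<forall>C. C \<subseteq> N \<and> C \<noteq> {} \<longrightarrow> (\<exists>k\<in>C. x k \<ge> v C))"

definition shapley :: "nat set \<Rightarrow> (nat set \<Rightarrow> real) \<Rightarrow> nat \<Rightarrow> real" where
  "shapley N v i = (\<Sum>S\<in>Pow (N - {i}).
      (fact (card S) * fact (card N - card S - 1) / fact (card N)) * (v (S \<union> {i}) - v S))"

definition proportional :: "nat set \<Rightarrow> (nat set \<Rightarrow> real) \<Rightarrow> (nat \<Rightarrow> real) \<Rightarrow> bool" where
  "proportional N v x \<longleftrightarrow> (\<exists>\<alpha>>0. \<forall>i\<in>N. x i = \<alpha> * shapley N v i)"

end

theory Submission
  imports Defs
begin

text \<open>With payoffs sorted increasingly, stability reduces to the conditions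
  \<open>x\<^sub>i \<ge> v {1..i}\<close> on initial segments: every coalition \<open>C\<close> lies in \<open>{1..max C}\<close>,
  and \<open>v\<close> is monotonic. Stability on the grand coalition together with \<open>x\<^sub>i \<le> v N\<close>
  forces \<open>x\<^sub>n = v N\<close>, which pins the proportionality constant down to \<open>v N / \<phi>\<^sub>n\<close>;
  conversely this constant is positive because \<open>\<phi>\<^sub>n > 0\<close> excludes \<open>v N = 0\<close>.\<close>

lemma stable_imp_initial_segment_bound:
  assumes "stable {1..n} v x" "mono_on {1..n} x" "i \<in> {1..n}"
  shows "v {1..i} \<le> x i"
proof -
  have "{1..i} \<subseteq> {1..n}" "{1..i} \<noteq> {}" using assms(3) by auto
  then obtain j where j: "j \<in> {1..i}" "v {1..i} \<le> x j"
    using assms(1) unfolding stable_def by blast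
  have "x j \<le> x i" using j(1) assms(3) by (auto intro: mono_onD[OF assms(2)])
  with j(2) show ?thesis by linarith
qed

lemma stable_if_initial_segment_bounds:
  assumes mono: "monotonic_game {1..n} v" and bound: "\<forall>i\<in>{1..n}. v {1..i} \<le> x i"
  shows "stable {1..n} v x"
  unfolding stable_def
proof (intro allI impI)
  fix C assume C: "C \<subseteq> {1..n} \<and> C \<noteq> {}"
  then have "finite C" using finite_subset by blast
  define m where "m = Max C"
  have "m \<in> C" "C \<subseteq> {1..m}" using C \<open>finite C\<close> by (auto simp: m_def)
  then have "v C \<le> v {1..m}" using mono C unfolding monotonic_game_def by auto
  also have "\<dots> \<le> x m" using bound \<open>m \<in> C\<close> C by auto
  finally show "\<exists>k\<in>C. v C \<le> x k" using \<open>m \<in> C\<close> by blast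
qed

lemma stable_payoff_vector_attains_grand_value:
  assumes "stable N v x" "payoff_vector N v x" "N \<noteq> {}"
  obtains k where "k \<in> N" "x k = v N"
proof -
  obtain k where "k \<in> N" "v N \<le> x k" using assms(1,3) unfolding stable_def by blast
  moreover have "x k \<le> v N" using assms(2) \<open>k \<in> N\<close> unfolding payoff_vector_def by blast
  ultimately show ?thesis using that by simp
qed

lemma proportional_constant:
  assumes "proportional N v x" "j \<in> N" "shapley N v j \<noteq> 0"
  shows "\<forall>i\<in>N. x i = shapley N v i * (x j / shapley N v j)"
proof -
  obtain \<alpha> where \<alpha>: "\<forall>i\<in>N. x i = \<alpha> * shapley N v i"
    using assms(1) unfolding proportional_def by blast
  then have "\<alpha> = x j / shapley N v j" using assms(2,3) by (simp add: field_simps)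
  with \<alpha> show ?thesis by simp
qed

lemma shapley_null_game:
  assumes null: "\<And>S. S \<subseteq> N \<Longrightarrow> v S = 0" and i: "i \<in> N"
  shows "shapley N v i = 0"
proof -
  have "v (S \<union> {i}) = 0" "v S = 0" if "S \<subseteq> N - {i}" for S
    using null[of "S \<union> {i}"] null[of S] i that by auto
  then show ?thesis unfolding shapley_def by (intro sum.neutral) auto
qed

lemma monotonic_game_grand_value_pos:
  assumes mono: "monotonic_game N v" and empty: "v {} = 0"
    and i: "i \<in> N" and pos: "shapley N v i > 0"
  shows "v N > 0"
proof (rule ccontr)
  assume "\<not> v N > 0"
  moreover have "v {} \<le> v S" "v S \<le> v N" if "S \<subseteq> N" for S
    using mono that unfolding monotonic_game_def by auto
  ultimately have "v S = 0" if "S \<subseteq> N" for S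
    using that empty by (metis order.antisym order.trans empty_subsetI not_less)
  then have "shapley N v i = 0" using shapley_null_game i by blast
  with pos show False by simp
qed

theorem theorem6:
  fixes n :: nat and v :: "nat set \<Rightarrow> real" and x :: "nat \<Rightarrow> real"
  assumes n: "n \<ge> 1"
    and mono: "monotonic_game {1..n} v"
    and empty: "v {} = 0"
    and payoff: "payoff_vector {1..n} v x"
    and sorted: "\<And>i j. 1 \<le> i \<Longrightarrow> i \<le> j \<Longrightarrow> j \<le> n \<Longrightarrow> x i \<le> x j"
    and phin: "shapley {1..n} v n > 0"
  shows "(stable {1..n} v x \<and> proportional {1..n} v x) \<longleftrightarrow>
    (\<forall>i\<in>{1..n}. x i = shapley {1..n} v i * (v {1..n} / shapley {1..n} v n)
       \<and> shapley {1..n} v i * (v {1..n} / shapley {1..n} v n) \<ge> v {1..i})"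
proof -
  let ?c = "v {1..n} / shapley {1..n} v n"
  have nN: "n \<in> {1..n}" using n by simp
  have x_mono: "mono_on {1..n} x" using sorted by (auto intro: mono_onI)
  show ?thesis
  proof
    assume stab: "stable {1..n} v x \<and> proportional {1..n} v x"
    then obtain k where k: "k \<in> {1..n}" "x k = v {1..n}"
      using payoff nN stable_payoff_vector_attains_grand_value by blast
    moreover have "x k \<le> x n" "x n \<le> v {1..n}"
      using sorted[of k n] k(1) payoff nN unfolding payoff_vector_def by auto
    ultimately have "x n = v {1..n}" by linarith
    then have "\<forall>i\<in>{1..n}. x i = shapley {1..n} v i * ?c"
      using proportional_constant[of _ v x n] stab nN phin by simp
    then show "\<forall>i\<in>{1..n}. x i = shapley {1..n} v i * ?c \<and> shapley {1..n} v i * ?c \<ge> v {1..i}"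
      using stable_imp_initial_segment_bound stab x_mono by fastforce
  next
    assume H: "\<forall>i\<in>{1..n}. x i = shapley {1..n} v i * ?c \<and> shapley {1..n} v i * ?c \<ge> v {1..i}"
    then have "stable {1..n} v x" using stable_if_initial_segment_bounds[OF mono] by simp
    moreover have "?c > 0" using monotonic_game_grand_value_pos[OF mono empty nN phin] phin by simp
    ultimately show "stable {1..n} v x \<and> proportional {1..n} v x"
      using H unfolding proportional_def by (metis mult.commute)
  qed
qed

end
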